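(* Fix $0<q<1$. Let $I$ be one of $[0,\infty)$, $[0,a]$, $[\alpha,1]$ ($\alpha<0$), with Jackson integrals $\int_0^\infty F\,d_qx=(1-q)\sum_{s\in\mathbb{Z}}q^sF(q^s)$, $\int_0^aF\,d_qx=(1-q)\sum_{n\ge0}aq^nF(aq^n)$, $\int_\alpha^1=\int_0^1-\int_0^\alpha$. Let $\rho(x;q)$ be a weight with finite moments, and $f,g$ polynomials with $\deg f\le2$, $\deg g\le1$, satisfying $\rho(qx)f(qx)=\rho(x)(f(x)-q^{-1/2}(1-q)xg(x))$ at lattice points, with $f\rho$ vanishing at the end points of the support. Let $\{p_n(x;q)\}$ be the monic polynomials with $\int_Ip_mp_n\rho\,d_qx=\tilde h_n\delta_{nm}$, $\tilde h_n\ne0$; let $\mathcal{A}_q=q^{-1/2}g(x)T_q+q^{-1}f(x)D_{q^{-1}}+f(x)D_q$ and $c_n(q):=-\int_Ip_{n+1}(x;q)(\mathcal{A}_qp_n)(x;q)\rho(x;q)\,d_qx$. Let $\omega(x;q)=f(qx;q)\rho(qx;q)$, $\langle\phi,\psi\rangle_{s,\omega}=\int_I(\phi D_q\psi-\psi D_q\phi)\omega\,d_qx$, and assume $\mathrm{Pf}[\langle x^i,x^j\rangle_{s,\omega}]_{i,j=0}^{2n-1}\ne0$ for all $n\ge1$. Then the polynomials $$Q_{2n+1}(x;q)=p_{2n+1}(x;q),\qquad Q_{2n}(x;q)=\sum_{l=0}^n\Big(\prod_{j=l}^{n-1}\frac{c_{2j+1}(q)}{c_{2j}(q)}\Big)p_{2l}(x;q)$$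 (which, when all $c_{2j+1}(q)\ne0$, equals $\big(\prod_{j=0}^{n-1}\frac{c_{2j+1}(q)}{c_{2j}(q)}\big)\sum_{l=0}^n\prod_{j=0}^{l-1}\frac{c_{2j}(q)}{c_{2j+1}(q)}p_{2l}(x;q)$) are monic $q$-skew orthogonal polynomials for $\langle\cdot,\cdot\rangle_{s,\omega}$: $\langle Q_{2n},Q_{2m+1}\rangle_{s,\omega}=-\langle Q_{2m+1},Q_{2n}\rangle_{s,\omega}=u_n(q)\delta_{nm}$, $\langle Q_{2m},Q_{2n}\rangle_{s,\omega}=\langle Q_{2m+1},Q_{2n+1}\rangle_{s,\omega}=0$, with $u_n(q)=c_{2n}(q)$. Moreover $p_{2n+1}=Q_{2n+1}$ and $p_{2n}(x;q)=Q_{2n}(x;q)-\frac{c_{2n-1}(q)}{c_{2n-2}(q)}Q_{2n-2}(x;q)$ for $n\ge1$.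
   Context: $T_q\phi(x)=\phi(qx)$, $D_q\phi(x)=\frac{\phi(x)-\phi(qx)}{(1-q)x}$, $D_{q^{-1}}\phi(x)=\frac{\phi(x)-\phi(q^{-1}x)}{(1-q^{-1})x}$. Polynomials have coefficients in $\mathbb{R}(q)$. Skew orthogonal polynomials are unique only up to $Q_{2m+1}\mapsto Q_{2m+1}+\gamma Q_{2m}$. *)

theory Defs
  imports "HOL-Analysis.Analysis" "HOL-Computational_Algebra.Polynomial"
    "HOL-Combinatorics.Permutations"
begin

datatype qinterval = HalfLine | ZeroTo real | AlphaToOne real

definition valid_qinterval :: "qinterval \<Rightarrow> bool" where
  "valid_qinterval I = (case I of HalfLine \<Rightarrow> True | ZeroTo a \<Rightarrow> a > 0 | AlphaToOne \<alpha> \<Rightarrow> \<alpha> < 0)"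

definition jint0 :: "real \<Rightarrow> real \<Rightarrow> (real \<Rightarrow> real) \<Rightarrow> real" where
  "jint0 q a F = (1 - q) * (\<Sum>\<^sub>\<infinity>n\<in>(UNIV::nat set). a * q ^ n * F (a * q ^ n))"

fun jint :: "real \<Rightarrow> qinterval \<Rightarrow> (real \<Rightarrow> real) \<Rightarrow> real" where
  "jint q HalfLine F = (1 - q) * (\<Sum>\<^sub>\<infinity>s\<in>(UNIV::int set). q powi s * F (q powi s))"
| "jint q (ZeroTo a) F = jint0 q a F"
| "jint q (AlphaToOne \<alpha>) F = jint0 q 1 F - jint0 q \<alpha> F"

text \<open>Jackson integrability (the defining sums converge absolutely).\<close>
definition jint0_integrable :: "real \<Rightarrow> real \<Rightarrow> (real \<Rightarrow> real) \<Rightarrow> bool" where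
  "jint0_integrable q a F = ((\<lambda>n::nat. a * q ^ n * F (a * q ^ n)) summable_on UNIV)"

fun jint_integrable :: "real \<Rightarrow> qinterval \<Rightarrow> (real \<Rightarrow> real) \<Rightarrow> bool" where
  "jint_integrable q HalfLine F = ((\<lambda>s::int. q powi s * F (q powi s)) summable_on UNIV)"
| "jint_integrable q (ZeroTo a) F = jint0_integrable q a F"
| "jint_integrable q (AlphaToOne \<alpha>) F = (jint0_integrable q 1 F \<and> jint0_integrable q \<alpha> F)"

fun qlattice :: "real \<Rightarrow> qinterval \<Rightarrow> real set" where
  "qlattice q HalfLine = range (\<lambda>s::int. q powi s)"
| "qlattice q (ZeroTo a) = range (\<lambda>n::nat. a * q ^ n)"
| "qlattice q (AlphaToOne \<alpha>) = range (\<lambda>n::nat. q ^ n) \<union> range (\<lambda>n::nat. \<alpha> * q ^ n)"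

text \<open>For [\<alpha>,1], the point 0 is interior: there we require that the limits along the
  two half-lattices exist and coincide.\<close>
fun vanishes_at_ends :: "real \<Rightarrow> qinterval \<Rightarrow> (real \<Rightarrow> real) \<Rightarrow> bool" where
  "vanishes_at_ends q HalfLine F =
     (((\<lambda>n::nat. F (q ^ n)) \<longlonglongrightarrow> 0) \<and> ((\<lambda>n::nat. F (inverse q ^ n)) \<longlonglongrightarrow> 0))"
| "vanishes_at_ends q (ZeroTo a) F = (F a = 0 \<and> ((\<lambda>n::nat. F (a * q ^ n)) \<longlonglongrightarrow> 0))"
| "vanishes_at_ends q (AlphaToOne \<alpha>) F = (F 1 = 0 \<and> F \<alpha> = 0 \<and>
     (\<exists>L. ((\<lambda>n::nat. F (q ^ n)) \<longlonglongrightarrow> L) \<and> ((\<lambda>n::nat. F (\<alpha> * q ^ n)) \<longlonglongrightarrow> L)))"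

definition Tq :: "real \<Rightarrow> (real \<Rightarrow> real) \<Rightarrow> real \<Rightarrow> real" where
  "Tq q \<phi> x = \<phi> (q * x)"

definition Dq :: "real \<Rightarrow> (real \<Rightarrow> real) \<Rightarrow> real \<Rightarrow> real" where
  "Dq q \<phi> x = (\<phi> x - \<phi> (q * x)) / ((1 - q) * x)"

definition Dqinv :: "real \<Rightarrow> (real \<Rightarrow> real) \<Rightarrow> real \<Rightarrow> real" where
  "Dqinv q \<phi> x = (\<phi> x - \<phi> (inverse q * x)) / ((1 - inverse q) * x)"

definition Aq :: "real \<Rightarrow> real poly \<Rightarrow> real poly \<Rightarrow> (real \<Rightarrow> real) \<Rightarrow> real \<Rightarrow> real" where
  "Aq q f g \<phi> x = q powr (-1/2) * poly g x * Tq q \<phi> x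
      + inverse q * poly f x * Dqinv q \<phi> x + poly f x * Dq q \<phi> x"

definition ccoef :: "real \<Rightarrow> qinterval \<Rightarrow> real poly \<Rightarrow> real poly \<Rightarrow> (real \<Rightarrow> real) \<Rightarrow> (nat \<Rightarrow> real poly) \<Rightarrow> nat \<Rightarrow> real" where
  "ccoef q I f g \<rho> p n = - jint q I (\<lambda>x. poly (p (Suc n)) x * Aq q f g (poly (p n)) x * \<rho> x)"

definition skew_ip :: "real \<Rightarrow> qinterval \<Rightarrow> (real \<Rightarrow> real) \<Rightarrow> (real \<Rightarrow> real) \<Rightarrow> (real \<Rightarrow> real) \<Rightarrow> real" where
  "skew_ip q I \<omega> \<phi> \<psi> = jint q I (\<lambda>x. (\<phi> x * Dq q \<psi> x - \<psi> x * Dq q \<phi> x) * \<omega> x)"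

definition pfaffian :: "(nat \<Rightarrow> nat \<Rightarrow> real) \<Rightarrow> nat \<Rightarrow> real" where
  "pfaffian A n = (1 / (2 ^ n * fact n)) *
     (\<Sum>\<sigma> | \<sigma> permutes {0..<2*n}. of_int (sign \<sigma>) * (\<Prod>i<n. A (\<sigma> (2*i)) (\<sigma> (2*i+1))))"

definition Qpoly :: "(nat \<Rightarrow> real) \<Rightarrow> (nat \<Rightarrow> real poly) \<Rightarrow> nat \<Rightarrow> real poly" where
  "Qpoly c p k = (if odd k then p k else
     (\<Sum>l\<le>k div 2. smult (\<Prod>j\<in>{l..<k div 2}. c (2*j+1) / c (2*j)) (p (2*l))))"

end

theory Submission
  imports Defs
begin

text \<open>
  Summation by parts on the lattice, combined with the q-Pearson equation, gives
  \<langle>\<phi>, \<psi>\<rangle>_s = - \<integral> \<psi> (A_q \<phi>) \<rho> d_qx, and A_q raises degrees by at most one.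
  By orthogonality the skew form is therefore tridiagonal in the basis p_n, with
  \<langle>p_n, p_(n+1)\<rangle>_s = c_n. If c_(2n) vanished, p_(2n+1) would annihilate every polynomial of
  degree at most 2n+1; its coefficient vector would be a null vector of the skew moment
  matrix of size 2n+2, whose Pfaffian would then vanish. The coefficients of Q_(2n) are
  chosen so that the contributions of p_(2m) and p_(2m+2) to \<langle>Q_(2n), p_(2m+1)\<rangle>_s cancel
  for m < n.
\<close>

section \<open>Pfaffians with a null vector\<close>

lemma alternating_pairing_sum_eq_0:
  fixes A :: "nat \<Rightarrow> nat \<Rightarrow> real" and g :: "nat \<Rightarrow> nat"
  assumes "b < 2*n" "N < 2*n" "b \<noteq> N" "g b = g N"
  shows "(\<Sum>\<sigma> | \<sigma> permutes {..<2*n}.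
           of_int (sign \<sigma>) * (\<Prod>i<n. A (g (\<sigma> (2*i))) (g (\<sigma> (2*i+1))))) = 0"
proof -
  define P where "P = {\<sigma>. \<sigma> permutes {..<2*n}}"
  define \<tau> where "\<tau> = Transposition.transpose b N"
  define T where "T = (\<lambda>\<sigma>. \<Prod>i<n. A (g (\<sigma> (2*i))) (g (\<sigma> (2*i+1))))"
  have \<tau>: "\<tau> permutes {..<2*n}"
    unfolding \<tau>_def using assms by (intro permutes_swap_id) auto
  have T_\<tau>: "T (\<tau> \<circ> \<sigma>) = T \<sigma>" for \<sigma>
  proof -
    have "g (\<tau> k) = g k" for k
      unfolding \<tau>_def using assms(4) by (cases "k = b"; cases "k = N") auto
    then show ?thesis unfolding T_def by simp
  qed
  have sign_\<tau>: "sign (\<tau> \<circ> \<sigma>) = - sign \<sigma>" if "\<sigma> \<in> P" for \<sigma>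
  proof -
    have "sign (\<tau> \<circ> \<sigma>) = sign \<tau> * sign \<sigma>"
      using that \<tau> unfolding P_def by (intro sign_compose) (auto intro: permutes_imp_permutation)
    then show ?thesis unfolding \<tau>_def using assms(3) by (simp add: sign_swap_id)
  qed
  have \<tau>_\<tau>: "\<tau> \<circ> (\<tau> \<circ> \<sigma>) = \<sigma>" for \<sigma> :: "nat \<Rightarrow> nat"
    unfolding \<tau>_def by (rule ext) simp
  have "(\<Sum>\<sigma>\<in>P. of_int (sign \<sigma>) * T \<sigma>) = (\<Sum>\<sigma>\<in>P. of_int (sign (\<tau> \<circ> \<sigma>)) * T (\<tau> \<circ> \<sigma>))"
    using \<tau> permutes_compose
    by (intro sum.reindex_bij_witness[where i="\<lambda>\<sigma>. \<tau> \<circ> \<sigma>" and j="\<lambda>\<sigma>. \<tau> \<circ> \<sigma>"])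
      (auto simp: \<tau>_\<tau> P_def)
  also have "\<dots> = - (\<Sum>\<sigma>\<in>P. of_int (sign \<sigma>) * T \<sigma>)"
    by (simp add: sign_\<tau> T_\<tau> sum_negf[symmetric])
  finally show ?thesis unfolding P_def T_def by simp
qed

lemma null_vector_pairing_sum_eq_0:
  fixes A :: "nat \<Rightarrow> nat \<Rightarrow> real" and v :: "nat \<Rightarrow> real"
  assumes \<sigma>: "\<sigma> permutes {..<2*n}" and N: "N < 2*n"
    and rows: "\<And>a. a < 2*n \<Longrightarrow> (\<Sum>b<2*n. v b * A b a) = 0"
    and cols: "\<And>a. a < 2*n \<Longrightarrow> (\<Sum>b<2*n. v b * A a b) = 0"
  defines "g \<equiv> \<lambda>b k. if k = N then b else k"
  shows "(\<Sum>b<2*n. v b * (\<Prod>i<n. A (g b (\<sigma> (2*i))) (g b (\<sigma> (2*i+1))))) = 0"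
proof -
  obtain m where m: "m < 2*n" "\<sigma> m = N"
    using permutes_image[OF \<sigma>] N by (metis imageE lessThan_iff)
  define i0 where "i0 = m div 2"
  have i0: "i0 < n" unfolding i0_def using m(1) by simp
  have inj: "inj \<sigma>" by (rule permutes_inj[OF \<sigma>])
  have other: "\<sigma> (2*i) \<noteq> N \<and> \<sigma> (2*i+1) \<noteq> N" if "i \<noteq> i0" for i
  proof -
    have "2*i \<noteq> m" "2*i+1 \<noteq> m" using that unfolding i0_def by auto
    then show ?thesis using inj m(2) by (metis injD)
  qed
  define rest where "rest = (\<Prod>i\<in>{..<n} - {i0}. A (\<sigma> (2*i)) (\<sigma> (2*i+1)))"
  have split: "(\<Prod>i<n. A (g b (\<sigma> (2*i))) (g b (\<sigma> (2*i+1))))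
      = A (g b (\<sigma> (2*i0))) (g b (\<sigma> (2*i0+1))) * rest" for b
  proof -
    have "(\<Prod>i<n. A (g b (\<sigma> (2*i))) (g b (\<sigma> (2*i+1))))
       = A (g b (\<sigma> (2*i0))) (g b (\<sigma> (2*i0+1)))
         * (\<Prod>i\<in>{..<n} - {i0}. A (g b (\<sigma> (2*i))) (g b (\<sigma> (2*i+1))))"
      using i0 by (subst prod.remove[of _ i0]) auto
    also have "(\<Prod>i\<in>{..<n} - {i0}. A (g b (\<sigma> (2*i))) (g b (\<sigma> (2*i+1)))) = rest"
      unfolding rest_def using other by (intro prod.cong) (auto simp: g_def)
    finally show ?thesis .
  qed
  have factor: "(\<Sum>b<2*n. v b * A (g b (\<sigma> (2*i0))) (g b (\<sigma> (2*i0+1)))) = 0"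
  proof (cases "even m")
    case True
    then have "m = 2*i0" "2*i0+1 \<noteq> m" unfolding i0_def by auto
    then have "\<sigma> (2*i0) = N" "\<sigma> (2*i0+1) \<noteq> N" using m inj by (metis injD)+
    moreover have "\<sigma> (2*i0+1) < 2*n" using i0 permutes_in_image[OF \<sigma>] by simp
    ultimately show ?thesis using rows unfolding g_def by simp
  next
    case False
    then have "m = 2*i0+1" "2*i0 \<noteq> m" unfolding i0_def by presburger+
    then have "\<sigma> (2*i0+1) = N" "\<sigma> (2*i0) \<noteq> N" using m inj by (metis injD)+
    moreover have "\<sigma> (2*i0) < 2*n" using i0 permutes_in_image[OF \<sigma>] by simp
    ultimately show ?thesis using cols unfolding g_def by simp
  qed
  have "(\<Sum>b<2*n. v b * (\<Prod>i<n. A (g b (\<sigma> (2*i))) (g b (\<sigma> (2*i+1)))))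
      = (\<Sum>b<2*n. v b * A (g b (\<sigma> (2*i0))) (g b (\<sigma> (2*i0+1)))) * rest"
    unfolding split by (simp add: sum_distrib_right mult.assoc)
  then show ?thesis using factor by simp
qed

lemma pfaffian_eq_0_if_null_vector:
  fixes A :: "nat \<Rightarrow> nat \<Rightarrow> real" and v :: "nat \<Rightarrow> real"
  assumes N: "N < 2*n" and v: "v N = 1"
    and rows: "\<And>a. a < 2*n \<Longrightarrow> (\<Sum>b<2*n. v b * A b a) = 0"
    and cols: "\<And>a. a < 2*n \<Longrightarrow> (\<Sum>b<2*n. v b * A a b) = 0"
  shows "pfaffian A n = 0"
proof -
  define P where "P = {\<sigma>. \<sigma> permutes {..<2*n}}"
  define g where "g = (\<lambda>b k. if k = N then b else k)"
  define T where "T = (\<lambda>b \<sigma>. \<Prod>i<n. A (g b (\<sigma> (2*i))) (g b (\<sigma> (2*i+1))))"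
  have T_N: "T N \<sigma> = (\<Prod>i<n. A (\<sigma> (2*i)) (\<sigma> (2*i+1)))" for \<sigma>
    unfolding T_def g_def by (intro prod.cong) auto
  \<comment> \<open>expand along the index N using the null vector; each term with b \<noteq> N has a
      repeated index and vanishes by alternation\<close>
  have T_N_expand: "T N \<sigma> = - (\<Sum>b\<in>{..<2*n} - {N}. v b * T b \<sigma>)" if "\<sigma> \<in> P" for \<sigma>
  proof -
    have "(\<Sum>b<2*n. v b * T b \<sigma>) = 0"
      using null_vector_pairing_sum_eq_0[OF _ N rows cols] that unfolding P_def T_def g_def by simp
    moreover have "(\<Sum>b<2*n. v b * T b \<sigma>) = T N \<sigma> + (\<Sum>b\<in>{..<2*n} - {N}. v b * T b \<sigma>)"
      using N v by (subst sum.remove[of _ N]) auto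
    ultimately show ?thesis by linarith
  qed
  have alternating: "(\<Sum>\<sigma>\<in>P. of_int (sign \<sigma>) * T b \<sigma>) = 0" if "b \<in> {..<2*n} - {N}" for b
    using alternating_pairing_sum_eq_0[of b n N "g b" A] that N unfolding P_def T_def g_def by auto
  have "(\<Sum>\<sigma>\<in>P. of_int (sign \<sigma>) * T N \<sigma>)
      = - (\<Sum>b\<in>{..<2*n} - {N}. v b * (\<Sum>\<sigma>\<in>P. of_int (sign \<sigma>) * T b \<sigma>))"
    by (simp add: T_N_expand sum_distrib_left sum_negf mult.left_commute sum.swap[of _ P])
  also have "\<dots> = 0" using alternating by simp
  finally show ?thesis unfolding pfaffian_def P_def T_N atLeast0LessThan by simp
qed

section \<open>Skew-symmetric forms on polynomials\<close>

lemma linear_vanishes_on_degree_le: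
  fixes \<Lambda> :: "real poly \<Rightarrow> real" and p :: "nat \<Rightarrow> real poly"
  assumes add: "\<And>a b. \<Lambda> (a + b) = \<Lambda> a + \<Lambda> b" and smult: "\<And>c a. \<Lambda> (smult c a) = c * \<Lambda> a"
    and p_monic: "\<And>n. degree (p n) = n \<and> lead_coeff (p n) = 1"
    and vanishes: "\<And>k. k \<le> K \<Longrightarrow> \<Lambda> (p k) = 0"
    and "degree r \<le> K"
  shows "\<Lambda> r = 0"
  using vanishes \<open>degree r \<le> K\<close>
proof (induction K arbitrary: r)
  case 0
  have "p 0 = 1" using p_monic[of 0] by (metis degree_eq_zeroE lead_coeff_pCons(2) one_pCons)
  moreover have "r = smult (coeff r 0) 1" using 0 by (metis degree_0_id le_zero_eq mult.right_neutral smult_pCons smult_0_right one_pCons)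
  ultimately have "\<Lambda> r = coeff r 0 * \<Lambda> (p 0)" using smult by metis
  then show ?case using 0 by simp
next
  case (Suc K)
  define r' where "r' = r - smult (coeff r (Suc K)) (p (Suc K))"
  have "degree r' \<le> K"
  proof (rule degree_le, intro allI impI)
    fix i assume "K < i"
    show "coeff r' i = 0"
    proof (cases "i = Suc K")
      case True
      have "coeff (p (Suc K)) (Suc K) = 1" using p_monic[of "Suc K"] by metis
      with True show ?thesis unfolding r'_def by simp
    next
      case False
      then have "degree r < i" "degree (p (Suc K)) < i" using Suc.prems(2) \<open>K < i\<close> p_monic by auto
      then show ?thesis unfolding r'_def by (simp add: coeff_eq_0)
    qed
  qed
  then have "\<Lambda> r' = 0" using Suc by simp
  moreover have "\<Lambda> r = \<Lambda> r' + coeff r (Suc K) * \<Lambda> (p (Suc K))"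
    unfolding r'_def by (metis add diff_add_cancel smult)
  ultimately show ?case using Suc.prems(1) by simp
qed

locale skew_form =
  fixes B :: "real poly \<Rightarrow> real poly \<Rightarrow> real"
  assumes add_right: "B \<phi> (\<psi>1 + \<psi>2) = B \<phi> \<psi>1 + B \<phi> \<psi>2"
    and smult_right: "B \<phi> (smult c \<psi>) = c * B \<phi> \<psi>"
    and antisym: "B \<phi> \<psi> = - B \<psi> \<phi>"
begin

lemma self: "B \<phi> \<phi> = 0"
  using antisym[of \<phi> \<phi>] by simp

lemma add_left: "B (\<phi>1 + \<phi>2) \<psi> = B \<phi>1 \<psi> + B \<phi>2 \<psi>"
  by (metis add_right antisym minus_add_distrib)

lemma smult_left: "B (smult c \<phi>) \<psi> = c * B \<phi> \<psi>"
  by (metis smult_right antisym mult_minus_right)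

lemma sum_right: "B \<phi> (\<Sum>k\<in>K. \<psi> k) = (\<Sum>k\<in>K. B \<phi> (\<psi> k))"
  by (induction K rule: infinite_finite_induct)
    (simp_all add: add_right smult_right[of \<phi> 0 0, simplified])

lemma sum_left: "B (\<Sum>k\<in>K. \<phi> k) \<psi> = (\<Sum>k\<in>K. B (\<phi> k) \<psi>)"
  by (induction K rule: infinite_finite_induct)
    (simp_all add: add_left smult_left[of 0 0 \<psi>, simplified])

end

lemma smult_sum_right: "smult a (\<Sum>i\<in>A. p i) = (\<Sum>i\<in>A. smult a (p i))"
  by (induction A rule: infinite_finite_induct) (simp_all add: smult_add_right)

lemma Qpoly_even: "Qpoly c p (2*n) = (\<Sum>l\<le>n. smult (\<Prod>j\<in>{l..<n}. c (2*j+1) / c (2*j)) (p (2*l)))"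
  unfolding Qpoly_def by simp

lemma Qpoly_odd: "Qpoly c p (2*n+1) = p (2*n+1)"
  unfolding Qpoly_def by simp

lemma Qpoly_even_Suc:
  "Qpoly c p (2 * Suc k) = smult (c (2*k+1) / c (2*k)) (Qpoly c p (2*k)) + p (2 * Suc k)"
proof -
  define r where "r = (\<lambda>j. c (2*j+1) / c (2*j))"
  have "(\<Sum>l\<le>k. smult (\<Prod>j\<in>{l..<Suc k}. r j) (p (2*l)))
      = (\<Sum>l\<le>k. smult (r k) (smult (\<Prod>j\<in>{l..<k}. r j) (p (2*l))))"
    by (intro sum.cong) (simp_all add: prod.atLeastLessThan_Suc mult.commute)
  also have "\<dots> = smult (r k) (Qpoly c p (2*k))"
    unfolding Qpoly_even r_def by (simp add: smult_sum_right)
  finally show ?thesis unfolding Qpoly_even[of c p "Suc k"] r_def by simp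
qed

lemma Qpoly_monic:
  assumes p_monic: "\<And>n. degree (p n) = n \<and> lead_coeff (p n) = 1"
  shows "degree (Qpoly c p k) = k \<and> lead_coeff (Qpoly c p k) = 1"
proof (cases "odd k")
  case True
  then have "Qpoly c p k = p k" unfolding Qpoly_def by simp
  then show ?thesis using p_monic[of k] by metis
next
  case False
  then obtain m where k: "k = 2*m" by (metis evenE)
  have coeff_p: "coeff (p (2*l)) i = (if l = m \<and> i = 2*m then 1 else 0)"
    if "l \<le> m" "2*m \<le> i" for l i
  proof (cases "l = m \<and> i = 2*m")
    case True then show ?thesis using p_monic[of "2*m"] by metis
  next
    case False
    then have "degree (p (2*l)) < i" using that p_monic[of "2*l"] by auto
    then show ?thesis using False by (simp add: coeff_eq_0)
  qed
  have coeff_Q: "coeff (Qpoly c p (2*m)) i = (if i = 2*m then 1 else 0)" if "2*m \<le> i" for i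
  proof -
    have "coeff (Qpoly c p (2*m)) i
        = (\<Sum>l\<le>m. (\<Prod>j\<in>{l..<m}. c (2*j+1) / c (2*j)) * (if l = m \<and> i = 2*m then 1 else 0))"
      unfolding Qpoly_even coeff_sum coeff_smult using that by (intro sum.cong) (simp_all add: coeff_p)
    then show ?thesis by (simp add: if_distrib cong: if_cong)
  qed
  have "degree (Qpoly c p (2*m)) = 2*m"
    using coeff_Q by (intro antisym degree_le le_degree) auto
  then show ?thesis using coeff_Q k by simp
qed

lemma Qpoly_even_normalized:
  assumes "\<And>j. c (2*j) \<noteq> 0" "\<And>j. c (2*j+1) \<noteq> 0"
  shows "Qpoly c p (2*n) = smult (\<Prod>j<n. c (2*j+1) / c (2*j))
            (\<Sum>l\<le>n. smult (\<Prod>j<l. c (2*j) / c (2*j+1)) (p (2*l)))"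
proof -
  define r where "r = (\<lambda>j. c (2*j+1) / c (2*j))"
  have "(\<Prod>j<n. r j) * (\<Prod>j<l. c (2*j) / c (2*j+1)) = (\<Prod>j\<in>{l..<n}. r j)" if "l \<le> n" for l
  proof -
    have "(\<Prod>j<l. r j) * (\<Prod>j<l. c (2*j) / c (2*j+1)) = 1"
      unfolding r_def using assms by (simp add: prod.distrib[symmetric])
    moreover have "(\<Prod>j<n. r j) = (\<Prod>j<l. r j) * (\<Prod>j\<in>{l..<n}. r j)"
      using prod.atLeastLessThan_concat[of 0 l n r] that by (simp add: atLeast0LessThan)
    ultimately show ?thesis by (simp add: algebra_simps)
  qed
  then show ?thesis
    unfolding Qpoly_even smult_sum_right smult_smult r_def[symmetric] by (intro sum.cong) simp_all
qed

locale tridiagonal_skew_form = skew_form B for B +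
  fixes p :: "nat \<Rightarrow> real poly" and c :: "nat \<Rightarrow> real"
  assumes monic: "\<And>n. degree (p n) = n \<and> lead_coeff (p n) = 1"
    and tridiagonal: "\<And>m n. B (p m) (p n) = (if n = Suc m then c m else if m = Suc n then - c n else 0)"
begin

lemma B_p_Suc_eq_0_if_c_eq_0:
  assumes "c N = 0" "degree r \<le> Suc N"
  shows "B (p (Suc N)) r = 0"
proof (rule linear_vanishes_on_degree_le[OF add_right smult_right monic _ assms(2)])
  show "B (p (Suc N)) (p k) = 0" if "k \<le> Suc N" for k
    using that assms(1) tridiagonal[of "Suc N" k] by auto
qed

lemma c_even_neq_0:
  assumes pfaffian: "pfaffian (\<lambda>i j. B (monom 1 i) (monom 1 j)) (Suc j) \<noteq> 0"
  shows "c (2*j) \<noteq> 0"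
proof
  assume c: "c (2*j) = 0"
  define N where "N = 2*j+1"
  define v where "v = (\<lambda>b. coeff (p N) b)"
  have p_N: "p N = (\<Sum>b<2 * Suc j. smult (v b) (monom 1 b))"
    using poly_as_sum_of_monoms'[of "p N" N] monic[of N]
    unfolding N_def v_def by (simp add: lessThan_Suc_atMost smult_monom)
  have B_N: "B (p N) r = 0" if "degree r \<le> N" for r
    using B_p_Suc_eq_0_if_c_eq_0[OF c] that unfolding N_def by simp
  have "pfaffian (\<lambda>i j. B (monom 1 i) (monom 1 j)) (Suc j) = 0"
  proof (rule pfaffian_eq_0_if_null_vector)
    show "v N = 1" unfolding v_def using monic[of N] by metis
    fix a assume "a < 2 * Suc j"
    then have B_N_a: "B (p N) (monom 1 a) = 0" by (intro B_N) (simp add: N_def degree_monom_eq)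
    show "(\<Sum>b<2 * Suc j. v b * B (monom 1 b) (monom 1 a)) = 0"
      using B_N_a unfolding p_N sum_left smult_left .
    show "(\<Sum>b<2 * Suc j. v b * B (monom 1 a) (monom 1 b)) = 0"
      using B_N_a antisym[of "monom 1 a" "p N"] unfolding p_N sum_right smult_right by simp
  qed (simp add: N_def)
  with pfaffian show False by simp
qed

lemma Qpoly_even_odd:
  assumes c_even: "\<And>j. c (2*j) \<noteq> 0"
  shows "B (Qpoly c p (2*n)) (Qpoly c p (2*m+1)) = (if n = m then c (2*n) else 0)"
proof -
  define C where "C = (\<lambda>l. \<Prod>j\<in>{l..<n}. c (2*j+1) / c (2*j))"
  have "B (Qpoly c p (2*n)) (Qpoly c p (2*m+1)) = (\<Sum>l\<le>n. C l * B (p (2*l)) (p (2*m+1)))"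
    unfolding Qpoly_even Qpoly_odd sum_left smult_left C_def ..
  also have "\<dots> = (\<Sum>l\<le>n. (if l = m then C m * c (2*m) else 0)
      + (if l = Suc m then - (C (Suc m) * c (2*m+1)) else 0))"
    by (intro sum.cong refl) (auto simp: tridiagonal)
  also have "\<dots> = (if m \<le> n then C m * c (2*m) else 0) + (if Suc m \<le> n then - (C (Suc m) * c (2*m+1)) else 0)"
    by (simp add: sum.distrib)
  also have "\<dots> = (if n = m then c (2*n) else 0)"
  proof (cases "m < n")
    case True
    \<comment> \<open>the contributions of p (2m) and p (2m+2) cancel\<close>
    then have "C m * c (2*m) = C (Suc m) * c (2*m+1)"
      unfolding C_def using c_even[of m] by (simp add: prod.atLeast_Suc_lessThan)
    then show ?thesis using True by simp
  qed (auto simp: C_def)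
  finally show ?thesis .
qed

lemma Qpoly_even_even: "B (Qpoly c p (2*m)) (Qpoly c p (2*n)) = 0"
proof -
  have "B (p (2*l)) (p (2*k)) = 0" for l k
  proof -
    have "2*k \<noteq> Suc (2*l)" "2*l \<noteq> Suc (2*k)" by presburger+
    then show ?thesis by (simp add: tridiagonal)
  qed
  then show ?thesis unfolding Qpoly_even sum_left smult_left sum_right smult_right by simp
qed

lemma Qpoly_odd_odd: "B (Qpoly c p (2*m+1)) (Qpoly c p (2*n+1)) = 0"
proof -
  have "2*n+1 \<noteq> Suc (2*m+1)" "2*m+1 \<noteq> Suc (2*n+1)" by presburger+
  then show ?thesis unfolding Qpoly_odd by (simp add: tridiagonal)
qed

end

section \<open>Jackson integrals as lattice sums\<close>

definition lattice_sum :: "('i \<Rightarrow> real) \<Rightarrow> (real \<Rightarrow> real) \<Rightarrow> real" where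
  "lattice_sum X F = (\<Sum>\<^sub>\<infinity>i. X i * F (X i))"

definition lattice_summable :: "('i \<Rightarrow> real) \<Rightarrow> (real \<Rightarrow> real) \<Rightarrow> bool" where
  "lattice_summable X F \<longleftrightarrow> (\<lambda>i. X i * F (X i)) summable_on UNIV"

lemma jint_as_lattice_sum:
  "jint q HalfLine F = (1 - q) * lattice_sum (\<lambda>s::int. q powi s) F"
  "jint q (ZeroTo a) F = (1 - q) * lattice_sum (\<lambda>n::nat. a * q ^ n) F"
  "jint q (AlphaToOne \<alpha>) F
     = (1 - q) * lattice_sum (\<lambda>n::nat. q ^ n) F - (1 - q) * lattice_sum (\<lambda>n::nat. \<alpha> * q ^ n) F"
  "jint_integrable q HalfLine F \<longleftrightarrow> lattice_summable (\<lambda>s::int. q powi s) F"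
  "jint_integrable q (ZeroTo a) F \<longleftrightarrow> lattice_summable (\<lambda>n::nat. a * q ^ n) F"
  "jint_integrable q (AlphaToOne \<alpha>) F
     \<longleftrightarrow> lattice_summable (\<lambda>n::nat. q ^ n) F \<and> lattice_summable (\<lambda>n::nat. \<alpha> * q ^ n) F"
  by (simp_all add: lattice_sum_def lattice_summable_def jint0_def jint0_integrable_def)

lemma lattice_summable_add:
  "lattice_summable X F \<Longrightarrow> lattice_summable X G \<Longrightarrow> lattice_summable X (\<lambda>x. F x + G x)"
  unfolding lattice_summable_def by (simp add: distrib_left summable_on_add)

lemma lattice_sum_add:
  "lattice_summable X F \<Longrightarrow> lattice_summable X G \<Longrightarrow>
     lattice_sum X (\<lambda>x. F x + G x) = lattice_sum X F + lattice_sum X G"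
  unfolding lattice_summable_def lattice_sum_def by (simp add: distrib_left infsum_add)

lemma lattice_summable_cmult:
  "lattice_summable X F \<Longrightarrow> lattice_summable X (\<lambda>x. c * F x)"
  unfolding lattice_summable_def by (simp add: mult.left_commute summable_on_cmult_right)

lemma lattice_sum_cmult: "lattice_sum X (\<lambda>x. c * F x) = c * lattice_sum X F"
  unfolding lattice_sum_def by (simp add: mult.left_commute infsum_cmult_right')

lemma lattice_summable_reindex:
  assumes "inj \<sigma>" and "lattice_summable X H"
    and "\<And>i. X i * V (X i) = X (\<sigma> i) * H (X (\<sigma> i))"
  shows "lattice_summable X V"
proof -
  have "(\<lambda>i. X i * H (X i)) summable_on range \<sigma>"
    using assms(2) summable_on_subset_banach unfolding lattice_summable_def by blast
  then have "(\<lambda>i. X (\<sigma> i) * H (X (\<sigma> i))) summable_on UNIV"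
    using summable_on_reindex[OF assms(1), of "\<lambda>i. X i * H (X i)"] by (simp add: comp_def)
  then show ?thesis unfolding lattice_summable_def assms(3) .
qed

lemma lattice_sum_telescope_nat:
  assumes "lattice_summable X F"
    and "\<And>n. X n * F (X n) = e n - e (Suc n)" and "e \<longlonglongrightarrow> L"
  shows "lattice_sum X F = e 0 - L"
proof -
  have "(\<lambda>n. X n * F (X n)) sums lattice_sum X F"
    using assms(1) unfolding lattice_summable_def lattice_sum_def by (intro has_sum_imp_sums) simp
  moreover have "(\<lambda>n. X n * F (X n)) sums (e 0 - L)"
    unfolding assms(2) by (rule telescope_sums'[OF assms(3)])
  ultimately show ?thesis using sums_unique2 by blast
qed

lemma lattice_sum_telescope_int:
  assumes F: "lattice_summable X F"
    and diff: "\<And>s. X s * F (X s) = e s - e (s + 1)"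
    and "(\<lambda>n. e (int n)) \<longlonglongrightarrow> 0" and "(\<lambda>n. e (- int n)) \<longlonglongrightarrow> 0"
  shows "lattice_sum X F = 0"
proof -
  define nonneg where "nonneg = (\<lambda>n::nat. int n)"
  define neg where "neg = (\<lambda>n::nat. - 1 - int n)"
  define T where "T = (\<lambda>i. X i * F (X i))"
  have inj: "inj nonneg" "inj neg" unfolding nonneg_def neg_def by (auto intro: injI)
  have T_summable: "T summable_on A" for A
    using F summable_on_subset_banach unfolding lattice_summable_def T_def by blast
  have half_summable: "lattice_summable (X \<circ> nonneg) F" "lattice_summable (X \<circ> neg) F"
    using T_summable summable_on_reindex[OF inj(1), of T] summable_on_reindex[OF inj(2), of T]
    unfolding lattice_summable_def T_def by (simp_all add: comp_def)
  have half_sum: "lattice_sum (X \<circ> nonneg) F = infsum T (range nonneg)"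
    "lattice_sum (X \<circ> neg) F = infsum T (range neg)"
    using infsum_reindex[OF inj(1), of T] infsum_reindex[OF inj(2), of T]
    unfolding lattice_sum_def T_def by (simp_all add: comp_def)
  have split: "range nonneg \<union> range neg = UNIV"
  proof -
    have "s \<in> range nonneg \<or> s \<in> range neg" for s
    proof (cases "s \<ge> 0")
      case True then show ?thesis unfolding nonneg_def by (metis nonneg_int_cases rangeI)
    next
      case False then have "s = neg (nat (- s - 1))" unfolding neg_def by simp
      then show ?thesis by blast
    qed
    then show ?thesis by blast
  qed
  have "range nonneg \<inter> range neg = {}" unfolding nonneg_def neg_def by auto
  then have "infsum T UNIV = infsum T (range nonneg) + infsum T (range neg)"
    using infsum_Un_disjoint[OF T_summable T_summable] split by metis
  then have "lattice_sum X F = lattice_sum (X \<circ> nonneg) F + lattice_sum (X \<circ> neg) F"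
    unfolding half_sum by (simp add: lattice_sum_def T_def)
  moreover have "lattice_sum (X \<circ> nonneg) F = e (int 0) - 0"
    by (rule lattice_sum_telescope_nat[where e = "\<lambda>n. e (int n)", OF half_summable(1) _ assms(3)])
      (simp add: nonneg_def diff add.commute)
  moreover have "lattice_sum (X \<circ> neg) (\<lambda>x. - 1 * F x) = e (- int 0) - 0"
    by (rule lattice_sum_telescope_nat[where e = "\<lambda>n. e (- int n)",
          OF lattice_summable_cmult[OF half_summable(2)] _ assms(4)])
      (simp add: neg_def diff)
  ultimately have "lattice_sum X F = (e (int 0) - 0) - (e (- int 0) - 0)"
    unfolding lattice_sum_cmult by linarith
  then show ?thesis by simp
qed

lemma qlattice_points:
  "q powi s \<in> qlattice q HalfLine"
  "a * q ^ n \<in> qlattice q (ZeroTo a)"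
  "q ^ n \<in> qlattice q (AlphaToOne \<alpha>)"
  "\<alpha> * q ^ n \<in> qlattice q (AlphaToOne \<alpha>)"
  by auto

lemma jint_integrable_add:
  "jint_integrable q I F \<Longrightarrow> jint_integrable q I G \<Longrightarrow> jint_integrable q I (\<lambda>x. F x + G x)"
  by (cases I) (simp_all del: jint.simps jint_integrable.simps add: jint_as_lattice_sum lattice_summable_add)

lemma jint_add:
  "jint_integrable q I F \<Longrightarrow> jint_integrable q I G \<Longrightarrow>
     jint q I (\<lambda>x. F x + G x) = jint q I F + jint q I G"
  by (cases I) (simp_all del: jint.simps jint_integrable.simps add: jint_as_lattice_sum lattice_sum_add algebra_simps)

lemma jint_integrable_cmult: "jint_integrable q I F \<Longrightarrow> jint_integrable q I (\<lambda>x. c * F x)"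
  by (cases I) (simp_all del: jint.simps jint_integrable.simps add: jint_as_lattice_sum lattice_summable_cmult)

lemma jint_cmult: "jint q I (\<lambda>x. c * F x) = c * jint q I F"
  by (cases I) (simp_all del: jint.simps jint_integrable.simps add: jint_as_lattice_sum lattice_sum_cmult algebra_simps)

lemma jint_integrable_sum:
  "finite K \<Longrightarrow> (\<And>k. k \<in> K \<Longrightarrow> jint_integrable q I (F k)) \<Longrightarrow>
     jint_integrable q I (\<lambda>x. \<Sum>k\<in>K. F k x)"
proof (induction K rule: finite_induct)
  case empty then show ?case by (cases I) (simp_all del: jint.simps jint_integrable.simps add: jint_as_lattice_sum lattice_summable_def)
next
  case (insert k K) then show ?case by (simp add: jint_integrable_add)
qed

lemma jint_cong:
  assumes "\<And>x. x \<in> qlattice q I \<Longrightarrow> F x = G x"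
  shows "jint q I F = jint q I G" and "jint_integrable q I F \<longleftrightarrow> jint_integrable q I G"
proof -
  have "jint q I F = jint q I G \<and> (jint_integrable q I F \<longleftrightarrow> jint_integrable q I G)"
  proof (cases I)
    case HalfLine
    then have "\<And>s. F (q powi s) = G (q powi s)" using assms qlattice_points by simp
    then show ?thesis using HalfLine by simp
  next
    case (ZeroTo a)
    then have "\<And>n. F (a * q ^ n) = G (a * q ^ n)" using assms qlattice_points by simp
    then show ?thesis using ZeroTo by (simp add: jint0_def jint0_integrable_def)
  next
    case (AlphaToOne \<alpha>)
    then have "\<And>n. F (q ^ n) = G (q ^ n)" "\<And>n. F (\<alpha> * q ^ n) = G (\<alpha> * q ^ n)"
      using assms qlattice_points by simp_all
    then show ?thesis using AlphaToOne by (simp add: jint0_def jint0_integrable_def)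
  qed
  then show "jint q I F = jint q I G" and "jint_integrable q I F \<longleftrightarrow> jint_integrable q I G" by simp_all
qed

lemma jint_integrable_shift:
  assumes q: "q \<noteq> 0" and H: "jint_integrable q I H"
    and shift: "\<And>x. x \<in> qlattice q I \<Longrightarrow> x * V x = (q * x) * H (q * x)"
  shows "jint_integrable q I V"
proof (cases I)
  case HalfLine
  have "q powi s * V (q powi s) = q powi (s + 1) * H (q powi (s + 1))" for s
    using shift[unfolded HalfLine, OF qlattice_points(1)] q HalfLine by (simp add: power_int_add mult.commute)
  then have "lattice_summable (\<lambda>s. q powi s) V"
    by (rule lattice_summable_reindex[where \<sigma> = "\<lambda>s. s + 1" and X = "\<lambda>s. q powi s", rotated 2])
      (use H HalfLine in \<open>simp_all add: inj_def jint_as_lattice_sum del: jint_integrable.simps\<close>)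
  then show ?thesis using HalfLine by (simp del: jint_integrable.simps add: jint_as_lattice_sum)
next
  case (ZeroTo a)
  have "a * q ^ n * V (a * q ^ n) = a * q ^ Suc n * H (a * q ^ Suc n)" for n
    using shift[unfolded ZeroTo, OF qlattice_points(2)] ZeroTo by (simp add: mult.left_commute)
  then have "lattice_summable (\<lambda>n. a * q ^ n) V"
    by (rule lattice_summable_reindex[where \<sigma> = Suc and X = "\<lambda>n. a * q ^ n", rotated 2])
      (use H ZeroTo in \<open>simp_all add: jint_as_lattice_sum del: jint_integrable.simps\<close>)
  then show ?thesis using ZeroTo by (simp del: jint_integrable.simps add: jint_as_lattice_sum)
next
  case (AlphaToOne \<alpha>)
  have "q ^ n * V (q ^ n) = q ^ Suc n * H (q ^ Suc n)" for n
    using shift[unfolded AlphaToOne, OF qlattice_points(3)] AlphaToOne by simp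
  then have "lattice_summable (\<lambda>n. q ^ n) V"
    by (rule lattice_summable_reindex[where \<sigma> = Suc and X = "\<lambda>n. q ^ n", rotated 2])
      (use H AlphaToOne in \<open>simp_all add: jint_as_lattice_sum del: jint_integrable.simps\<close>)
  moreover have "\<alpha> * q ^ n * V (\<alpha> * q ^ n) = \<alpha> * q ^ Suc n * H (\<alpha> * q ^ Suc n)" for n
    using shift[unfolded AlphaToOne, OF qlattice_points(4)] AlphaToOne by (simp add: mult.left_commute)
  then have "lattice_summable (\<lambda>n. \<alpha> * q ^ n) V"
    by (rule lattice_summable_reindex[where \<sigma> = Suc and X = "\<lambda>n. \<alpha> * q ^ n", rotated 2])
      (use H AlphaToOne in \<open>simp_all add: jint_as_lattice_sum del: jint_integrable.simps\<close>)
  ultimately show ?thesis using AlphaToOne by (simp del: jint_integrable.simps add: jint_as_lattice_sum)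
qed

lemma jint_q_difference_eq_0:
  assumes q: "0 < q" "q < 1" and F: "jint_integrable q I F"
    and diff: "\<And>x. x \<in> qlattice q I \<Longrightarrow> x * F x = E x - E (q * x)"
    and ends: "vanishes_at_ends q I E"
  shows "jint q I F = 0"
proof (cases I)
  case HalfLine
  have "lattice_sum (\<lambda>s. q powi s) F = 0"
  proof (rule lattice_sum_telescope_int[where e = "\<lambda>s. E (q powi s)"])
    show "lattice_summable (\<lambda>s. q powi s) F"
      using F HalfLine by (simp del: jint_integrable.simps add: jint_as_lattice_sum)
    show "q powi s * F (q powi s) = E (q powi s) - E (q powi (s + 1))" for s
      using diff[unfolded HalfLine, OF qlattice_points(1)] q by (simp add: power_int_add mult.commute)
    show "(\<lambda>n. E (q powi int n)) \<longlonglongrightarrow> 0" "(\<lambda>n. E (q powi (- int n))) \<longlonglongrightarrow> 0"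
      using ends HalfLine by (simp_all add: power_int_minus power_inverse)
  qed
  then show ?thesis using HalfLine by (simp del: jint.simps add: jint_as_lattice_sum)
next
  case (ZeroTo a)
  have "lattice_sum (\<lambda>n. a * q ^ n) F = E (a * q ^ 0) - 0"
  proof (rule lattice_sum_telescope_nat[where e = "\<lambda>n. E (a * q ^ n)"])
    show "lattice_summable (\<lambda>n. a * q ^ n) F"
      using F ZeroTo by (simp del: jint_integrable.simps add: jint_as_lattice_sum)
    show "a * q ^ n * F (a * q ^ n) = E (a * q ^ n) - E (a * q ^ Suc n)" for n
      using diff[unfolded ZeroTo, OF qlattice_points(2)] by (simp add: mult.left_commute)
    show "(\<lambda>n. E (a * q ^ n)) \<longlonglongrightarrow> 0" using ends ZeroTo by simp
  qed
  then show ?thesis using ZeroTo ends by (simp del: jint.simps add: jint_as_lattice_sum)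
next
  case (AlphaToOne \<alpha>)
  \<comment> \<open>the boundary terms of the two half-lattices at the interior point 0 cancel\<close>
  obtain L where L: "(\<lambda>n. E (q ^ n)) \<longlonglongrightarrow> L" "(\<lambda>n. E (\<alpha> * q ^ n)) \<longlonglongrightarrow> L"
    using ends AlphaToOne by auto
  have "lattice_sum (\<lambda>n. q ^ n) F = E (q ^ 0) - L"
  proof (rule lattice_sum_telescope_nat[where e = "\<lambda>n. E (q ^ n)", OF _ _ L(1)])
    show "lattice_summable (\<lambda>n. q ^ n) F"
      using F AlphaToOne by (simp del: jint_integrable.simps add: jint_as_lattice_sum)
    show "q ^ n * F (q ^ n) = E (q ^ n) - E (q ^ Suc n)" for n
      using diff[unfolded AlphaToOne, OF qlattice_points(3)] by simp
  qed
  moreover have "lattice_sum (\<lambda>n. \<alpha> * q ^ n) F = E (\<alpha> * q ^ 0) - L"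
  proof (rule lattice_sum_telescope_nat[where e = "\<lambda>n. E (\<alpha> * q ^ n)", OF _ _ L(2)])
    show "lattice_summable (\<lambda>n. \<alpha> * q ^ n) F"
      using F AlphaToOne by (simp del: jint_integrable.simps add: jint_as_lattice_sum)
    show "\<alpha> * q ^ n * F (\<alpha> * q ^ n) = E (\<alpha> * q ^ n) - E (\<alpha> * q ^ Suc n)" for n
      using diff[unfolded AlphaToOne, OF qlattice_points(4)] by (simp add: mult.left_commute)
  qed
  ultimately show ?thesis using AlphaToOne ends by (simp del: jint.simps add: jint_as_lattice_sum)
qed

lemma jint_integrable_HalfLine_tendsto_0:
  assumes q: "0 < q" "q < 1" and F: "jint_integrable q HalfLine F"
  shows "(\<lambda>n. F (inverse q ^ n)) \<longlonglongrightarrow> 0"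
proof -
  define T where "T = (\<lambda>s. q powi s * F (q powi s))"
  define neg where "neg = (\<lambda>n::nat. - int n)"
  have "inj neg" unfolding neg_def by (simp add: inj_def)
  moreover have "T summable_on range neg" using F summable_on_subset_banach unfolding T_def by auto
  ultimately have "(T \<circ> neg) summable_on UNIV" using summable_on_reindex by blast
  moreover have "T \<circ> neg = (\<lambda>n. inverse q ^ n * F (inverse q ^ n))"
    unfolding T_def neg_def by (simp add: comp_def power_int_minus power_inverse)
  ultimately have "summable (\<lambda>n. inverse q ^ n * F (inverse q ^ n))"
    by (metis summable_on_imp_summable)
  then have "(\<lambda>n. inverse q ^ n * F (inverse q ^ n)) \<longlonglongrightarrow> 0"
    by (rule summable_LIMSEQ_zero)
  then have "(\<lambda>n. q ^ n * (inverse q ^ n * F (inverse q ^ n))) \<longlonglongrightarrow> 0 * 0"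
    using q by (intro tendsto_mult LIMSEQ_power_zero) simp_all
  moreover have "q ^ n * (inverse q ^ n * F (inverse q ^ n)) = F (inverse q ^ n)" for n
    using q by (simp add: power_inverse[symmetric] field_simps)
  ultimately show ?thesis by simp
qed

section \<open>The q-operators on polynomials\<close>

lemma poly_pcompose_scale: "poly (pcompose p [:0, c:]) x = poly p (c * x)"
  by (simp add: poly_pcompose algebra_simps)

lemma degree_pcompose_scale_le: "degree (pcompose p [:0, c:]) \<le> degree p"
  using degree_pcompose_le[of p "[:0, c:]"] by (cases "c = 0") auto

lemma Dq_times: "x \<noteq> 0 \<Longrightarrow> q \<noteq> 1 \<Longrightarrow> (1 - q) * x * Dq q \<phi> x = \<phi> x - \<phi> (q * x)"
  by (simp add: Dq_def)

lemma Dqinv_times: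
  assumes "x \<noteq> 0" "0 < q" "q \<noteq> 1"
  shows "(1 - q) * x * (inverse q * Dqinv q \<phi> x) = \<phi> (inverse q * x) - \<phi> x"
proof -
  have "1 - inverse q = - (1 - q) / q" using assms by (simp add: field_simps)
  then show ?thesis using assms unfolding Dqinv_def by (simp add: field_simps)
qed

lemma Dq_skew_expand:
  assumes "x \<noteq> 0" "q \<noteq> 1"
  shows "(1 - q) * x * (\<phi> x * Dq q \<psi> x - \<psi> x * Dq q \<phi> x) = \<psi> x * \<phi> (q * x) - \<phi> x * \<psi> (q * x)"
proof -
  have "(1 - q) * x * (\<phi> x * Dq q \<psi> x - \<psi> x * Dq q \<phi> x)
      = \<phi> x * ((1 - q) * x * Dq q \<psi> x) - \<psi> x * ((1 - q) * x * Dq q \<phi> x)"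
    by (simp add: algebra_simps)
  then show ?thesis unfolding Dq_times[OF assms] by (simp add: algebra_simps)
qed

lemma Aq_expand:
  assumes "x \<noteq> 0" "0 < q" "q \<noteq> 1"
  shows "(1 - q) * x * Aq q f g \<phi> x
    = q powr (-1/2) * (1 - q) * x * poly g x * \<phi> (q * x) + poly f x * \<phi> (inverse q * x) - poly f x * \<phi> (q * x)"
proof -
  have "(1 - q) * x * Aq q f g \<phi> x = q powr (-1/2) * (1 - q) * x * poly g x * \<phi> (q * x)
      + poly f x * ((1 - q) * x * (inverse q * Dqinv q \<phi> x)) + poly f x * ((1 - q) * x * Dq q \<phi> x)"
    unfolding Aq_def Tq_def by (simp add: algebra_simps)
  then show ?thesis unfolding Dq_times[OF assms(1,3)] Dqinv_times[OF assms] by (simp add: algebra_simps)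
qed

lemma Aq_poly:
  assumes q: "0 < q" "q \<noteq> 1" and f: "degree f \<le> 2" and g: "degree g \<le> 1"
  obtains R where "degree R \<le> degree \<phi> + 1" "\<And>x. x \<noteq> 0 \<Longrightarrow> Aq q f g (poly \<phi>) x = poly R x"
proof -
  define k where "k = q powr (-1/2)"
  define W where "W = f * pcompose \<phi> [:0, inverse q:] - (f - smult (k * (1 - q)) [:0, 1:] * g) * pcompose \<phi> [:0, q:]"
  have W: "poly W x = (1 - q) * x * Aq q f g (poly \<phi>) x" if "x \<noteq> 0" for x
    unfolding W_def Aq_expand[OF that q(1,2)] k_def by (simp add: poly_pcompose_scale algebra_simps)
  have "degree (smult (k * (1 - q)) [:0, 1:] * g) \<le> 2"
    using degree_mult_le[of "smult (k * (1 - q)) [:0, 1:]" g] g degree_smult_le[of "k * (1 - q)" "[:0, 1:]"]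
    by simp
  then have deg_lin: "degree (f - smult (k * (1 - q)) [:0, 1:] * g) \<le> 2"
    using f by (intro degree_diff_le) simp_all
  have deg_mult: "degree (a * pcompose \<phi> [:0, c:]) \<le> degree \<phi> + 2" if "degree a \<le> 2" for a c
    using degree_mult_le[of a "pcompose \<phi> [:0, c:]"] degree_pcompose_scale_le[of \<phi> c] that by linarith
  have "degree W \<le> degree \<phi> + 2"
    unfolding W_def by (rule degree_diff_le[OF deg_mult[OF f] deg_mult[OF deg_lin]])
  moreover have "poly W 0 = 0" unfolding W_def by (simp add: poly_pcompose_scale)
  then obtain W0 where W0: "W = [:0, 1:] * W0" using dvd_iff_poly_eq_0[of 0 W] by (auto elim: dvdE)
  ultimately have "degree W0 \<le> degree \<phi> + 1"
    by (cases "W0 = 0") (auto simp: degree_mult_eq)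
  show ?thesis
  proof (rule that[of "smult (1 / (1 - q)) W0"])
    show "degree (smult (1 / (1 - q)) W0) \<le> degree \<phi> + 1"
      using \<open>degree W0 \<le> degree \<phi> + 1\<close> degree_smult_le order_trans by blast
    show "Aq q f g (poly \<phi>) x = poly (smult (1 / (1 - q)) W0) x" if "x \<noteq> 0" for x
    proof -
      have "x * poly W0 x = x * ((1 - q) * Aq q f g (poly \<phi>) x)"
        using W[OF that] unfolding W0 by (simp add: algebra_simps)
      then have "poly W0 x = (1 - q) * Aq q f g (poly \<phi>) x" using that by simp
      then show ?thesis using q(2) by (simp add: field_simps)
    qed
  qed
qed

lemma skew_integrand_poly:
  assumes q: "0 < q" "q \<noteq> 1"
  obtains P where "\<And>x. x \<noteq> 0 \<Longrightarrow>
     x * ((poly \<phi> x * Dq q (poly \<psi>) x - poly \<psi> x * Dq q (poly \<phi>) x) * (poly f (q * x) * \<rho> (q * x)))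
       = (q * x) * (poly P (q * x) * \<rho> (q * x))"
proof -
  define D where "D = \<psi> * pcompose \<phi> [:0, q:] - \<phi> * pcompose \<psi> [:0, q:]"
  have "poly D 0 = 0" unfolding D_def by (simp add: poly_pcompose_scale)
  then obtain D0 where D0: "D = [:0, 1:] * D0" using dvd_iff_poly_eq_0[of 0 D] by (auto elim: dvdE)
  define P where "P = smult (1 / (q * (1 - q))) (pcompose D0 [:0, inverse q:] * f)"
  show ?thesis
  proof (rule that[of P])
    fix x :: real assume x: "x \<noteq> 0"
    define S where "S = poly \<phi> x * Dq q (poly \<psi>) x - poly \<psi> x * Dq q (poly \<phi>) x"
    have "(1 - q) * x * S = poly D x"
      unfolding S_def D_def Dq_skew_expand[OF x q(2)] by (simp add: poly_pcompose_scale)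
    also have "\<dots> = x * poly D0 x" unfolding D0 by simp
    finally have "x * S * (1 - q) = x * poly D0 x" by (simp only: ac_simps)
    then have "x * S = x * poly D0 x / (1 - q)" using q(2) by (simp add: eq_divide_eq)
    then have "x * (S * (poly f (q * x) * \<rho> (q * x))) = x * poly D0 x / (1 - q) * (poly f (q * x) * \<rho> (q * x))"
      by (simp add: mult.assoc[symmetric])
    also have "\<dots> = (q * x) * (poly P (q * x) * \<rho> (q * x))"
      unfolding P_def using q by (simp add: poly_pcompose_scale field_simps)
    finally show "x * (S * (poly f (q * x) * \<rho> (q * x))) = (q * x) * (poly P (q * x) * \<rho> (q * x))" .
  qed
qed

lemma pearson_q_difference:
  fixes \<rho> :: "real \<Rightarrow> real" and f g \<phi> \<psi> :: "real poly"
  assumes x: "x \<noteq> 0" and q: "0 < q" "q \<noteq> 1"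
    and pearson: "\<rho> (q * x) * poly f (q * x) = \<rho> x * (poly f x - q powr (-1/2) * (1 - q) * x * poly g x)"
  defines "E \<equiv> \<lambda>y. poly f y * \<rho> y * poly \<phi> (inverse q * y) * poly \<psi> y"
  shows "(1 - q) * x * (poly \<psi> x * Aq q f g (poly \<phi>) x * \<rho> x
      + (poly \<phi> x * Dq q (poly \<psi>) x - poly \<psi> x * Dq q (poly \<phi>) x) * (poly f (q * x) * \<rho> (q * x)))
    = E x - E (q * x)"
proof -
  define k where "k = q powr (-1/2)"
  have "(1 - q) * x * (poly \<psi> x * Aq q f g (poly \<phi>) x * \<rho> x
      + (poly \<phi> x * Dq q (poly \<psi>) x - poly \<psi> x * Dq q (poly \<phi>) x) * (poly f (q * x) * \<rho> (q * x)))
    = poly \<psi> x * \<rho> x * ((1 - q) * x * Aq q f g (poly \<phi>) x)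
      + ((1 - q) * x * (poly \<phi> x * Dq q (poly \<psi>) x - poly \<psi> x * Dq q (poly \<phi>) x)) * (\<rho> (q * x) * poly f (q * x))"
    by (simp add: algebra_simps)
  also have "\<dots> = poly \<psi> x * \<rho> x * (k * (1 - q) * x * poly g x * poly \<phi> (q * x)
        + poly f x * poly \<phi> (inverse q * x) - poly f x * poly \<phi> (q * x))
      + (poly \<psi> x * poly \<phi> (q * x) - poly \<phi> x * poly \<psi> (q * x)) * (\<rho> x * (poly f x - k * (1 - q) * x * poly g x))"
    unfolding Aq_expand[OF x q] Dq_skew_expand[OF x q(2)] pearson k_def ..
  also have "\<dots> = poly f x * \<rho> x * poly \<phi> (inverse q * x) * poly \<psi> x
      - \<rho> x * (poly f x - k * (1 - q) * x * poly g x) * poly \<phi> x * poly \<psi> (q * x)"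
    by (simp add: algebra_simps)
  also have "\<dots> = E x - E (q * x)"
  proof -
    have iq: "inverse q * (q * x) = x" using q by simp
    show ?thesis using pearson unfolding E_def k_def iq by (simp add: mult.commute)
  qed
  finally show ?thesis .
qed

section \<open>Weights satisfying the q-Pearson equation\<close>

locale jackson_pearson =
  fixes q :: real and I :: qinterval and \<rho> :: "real \<Rightarrow> real" and f g :: "real poly"
  assumes q: "0 < q" "q < 1" and I: "valid_qinterval I"
    and moments: "\<And>k::nat. jint_integrable q I (\<lambda>x. x ^ k * \<rho> x)"
    and degf: "degree f \<le> 2" and degg: "degree g \<le> 1"
    and pearson: "\<And>x. x \<in> qlattice q I \<Longrightarrow>
        \<rho> (q * x) * poly f (q * x) = \<rho> x * (poly f x - q powr (-1/2) * (1 - q) * x * poly g x)"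
    and ends: "vanishes_at_ends q I (\<lambda>x. poly f x * \<rho> x)"
begin

definition moment :: "real poly \<Rightarrow> real" where
  "moment P = jint q I (\<lambda>x. poly P x * \<rho> x)"

definition skew :: "real poly \<Rightarrow> real poly \<Rightarrow> real" where
  "skew \<phi> \<psi> = skew_ip q I (\<lambda>x. poly f (q * x) * \<rho> (q * x)) (poly \<phi>) (poly \<psi>)"

lemma qlattice_nonzero: "x \<in> qlattice q I \<Longrightarrow> x \<noteq> 0"
  using I q by (cases I) (auto simp: valid_qinterval_def)

lemma jint_integrable_poly_weight: "jint_integrable q I (\<lambda>x. poly P x * \<rho> x)"
proof -
  have "(\<lambda>x. poly P x * \<rho> x) = (\<lambda>x. \<Sum>i\<le>degree P. coeff P i * (x ^ i * \<rho> x))"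
    by (simp add: poly_altdef sum_distrib_right mult.assoc)
  then show ?thesis by (simp add: jint_integrable_sum jint_integrable_cmult moments)
qed

lemma moment_add: "moment (P + Q) = moment P + moment Q"
  unfolding moment_def by (simp add: distrib_right jint_add jint_integrable_poly_weight)

lemma moment_smult: "moment (smult c P) = c * moment P"
  unfolding moment_def by (simp add: mult.assoc jint_cmult)

lemma vanishes_at_ends_weight_poly: "vanishes_at_ends q I (\<lambda>x. poly f x * \<rho> x * poly R x)"
proof -
  have R_0: "(\<lambda>n. poly R (a * q ^ n)) \<longlonglongrightarrow> poly R 0" for a
  proof -
    have "(\<lambda>n. a * q ^ n) \<longlonglongrightarrow> a * 0" using q by (intro tendsto_intros LIMSEQ_power_zero) simp
    then show ?thesis by (intro tendsto_intros) simp
  qed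
  show ?thesis
  proof (cases I)
    case HalfLine
    have "(\<lambda>n. poly (f * R) (inverse q ^ n) * \<rho> (inverse q ^ n)) \<longlonglongrightarrow> 0"
      using q jint_integrable_poly_weight[of "f * R"] HalfLine by (intro jint_integrable_HalfLine_tendsto_0) auto
    moreover have "(\<lambda>n. poly f (q ^ n) * \<rho> (q ^ n) * poly R (q ^ n)) \<longlonglongrightarrow> 0 * poly R 0"
      using ends HalfLine R_0[of 1] by (intro tendsto_mult) simp_all
    ultimately show ?thesis using HalfLine by (simp add: mult_ac)
  next
    case (ZeroTo a)
    have "(\<lambda>n. poly f (a * q ^ n) * \<rho> (a * q ^ n) * poly R (a * q ^ n)) \<longlonglongrightarrow> 0 * poly R 0"
      using ends ZeroTo R_0 by (intro tendsto_mult) simp_all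
    then show ?thesis using ends ZeroTo by simp
  next
    case (AlphaToOne \<alpha>)
    then obtain L where "(\<lambda>n. poly f (q ^ n) * \<rho> (q ^ n)) \<longlonglongrightarrow> L"
      "(\<lambda>n. poly f (\<alpha> * q ^ n) * \<rho> (\<alpha> * q ^ n)) \<longlonglongrightarrow> L"
      using ends by auto
    then have "(\<lambda>n. poly f (q ^ n) * \<rho> (q ^ n) * poly R (q ^ n)) \<longlonglongrightarrow> L * poly R 0"
      "(\<lambda>n. poly f (\<alpha> * q ^ n) * \<rho> (\<alpha> * q ^ n) * poly R (\<alpha> * q ^ n)) \<longlonglongrightarrow> L * poly R 0"
      using R_0[of 1] R_0[of \<alpha>] by (auto intro: tendsto_mult)
    then show ?thesis using ends AlphaToOne by auto
  qed
qed

lemma jint_Aq_eq_moment: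
  obtains R where "degree R \<le> degree \<phi> + 1"
    "\<And>\<psi>. jint q I (\<lambda>x. poly \<psi> x * Aq q f g (poly \<phi>) x * \<rho> x) = moment (\<psi> * R)"
    "\<And>\<psi>. jint_integrable q I (\<lambda>x. poly \<psi> x * Aq q f g (poly \<phi>) x * \<rho> x)"
proof -
  obtain R where R: "degree R \<le> degree \<phi> + 1" "\<And>x. x \<noteq> 0 \<Longrightarrow> Aq q f g (poly \<phi>) x = poly R x"
    using Aq_poly[of q f g \<phi>] q degf degg by auto
  have eq: "poly \<psi> x * Aq q f g (poly \<phi>) x * \<rho> x = poly (\<psi> * R) x * \<rho> x"
    if "x \<in> qlattice q I" for \<psi> x
    using R(2)[OF qlattice_nonzero[OF that]] by simp
  show ?thesis
  proof (rule that[OF R(1)])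
    fix \<psi>
    show "jint q I (\<lambda>x. poly \<psi> x * Aq q f g (poly \<phi>) x * \<rho> x) = moment (\<psi> * R)"
      unfolding moment_def by (rule jint_cong(1)) (rule eq)
    show "jint_integrable q I (\<lambda>x. poly \<psi> x * Aq q f g (poly \<phi>) x * \<rho> x)"
    proof -
      have "jint_integrable q I (\<lambda>x. poly \<psi> x * Aq q f g (poly \<phi>) x * \<rho> x)
          \<longleftrightarrow> jint_integrable q I (\<lambda>x. poly (\<psi> * R) x * \<rho> x)"
        by (rule jint_cong(2)) (rule eq)
      then show ?thesis using jint_integrable_poly_weight by blast
    qed
  qed
qed

text \<open>q-integration by parts: by the Pearson equation the two integrands add up to the
  q-difference of f \<rho> times a polynomial, which vanishes at the ends.\<close>
lemma skew_eq_neg_jint_Aq: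
  "skew \<phi> \<psi> = - jint q I (\<lambda>x. poly \<psi> x * Aq q f g (poly \<phi>) x * \<rho> x)"
proof -
  define U where "U = (\<lambda>x. poly \<psi> x * Aq q f g (poly \<phi>) x * \<rho> x)"
  define V where "V = (\<lambda>x. (poly \<phi> x * Dq q (poly \<psi>) x - poly \<psi> x * Dq q (poly \<phi>) x)
      * (poly f (q * x) * \<rho> (q * x)))"
  define E where "E = (\<lambda>y. poly f y * \<rho> y * poly (pcompose \<phi> [:0, inverse q:] * \<psi>) y)"
  obtain R where "\<And>\<psi>. jint_integrable q I (\<lambda>x. poly \<psi> x * Aq q f g (poly \<phi>) x * \<rho> x)"
    using jint_Aq_eq_moment by blast
  then have U: "jint_integrable q I U" unfolding U_def .
  obtain P where P: "\<And>x. x \<noteq> 0 \<Longrightarrow> x * V x = (q * x) * (poly P (q * x) * \<rho> (q * x))"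
    using skew_integrand_poly[of q \<phi> \<psi> f \<rho>] q unfolding V_def by auto
  have V: "jint_integrable q I V"
  proof (rule jint_integrable_shift[where H = "\<lambda>x. poly P x * \<rho> x"])
    show "x * V x = q * x * (poly P (q * x) * \<rho> (q * x))" if "x \<in> qlattice q I" for x
      using P[OF qlattice_nonzero[OF that]] by simp
  qed (use q jint_integrable_poly_weight in auto)
  have "jint q I (\<lambda>x. (1 - q) * (U x + V x)) = 0"
  proof (rule jint_q_difference_eq_0[OF q])
    show "jint_integrable q I (\<lambda>x. (1 - q) * (U x + V x))"
      using U V by (intro jint_integrable_cmult jint_integrable_add)
    show "x * ((1 - q) * (U x + V x)) = E x - E (q * x)" if "x \<in> qlattice q I" for x
      using pearson_q_difference[OF qlattice_nonzero[OF that] q(1) _ pearson[OF that], of \<psi> \<phi>] q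
      unfolding U_def V_def E_def by (simp add: poly_pcompose_scale mult_ac)
    show "vanishes_at_ends q I E" unfolding E_def by (rule vanishes_at_ends_weight_poly)
  qed
  then have "(1 - q) * (jint q I U + jint q I V) = 0"
    by (simp only: jint_cmult jint_add[OF U V])
  then have "jint q I V = - jint q I U" using q by simp
  then show ?thesis unfolding skew_def skew_ip_def U_def V_def .
qed

lemma skew_eq_neg_moment:
  obtains R where "degree R \<le> degree \<phi> + 1" "\<And>\<psi>. skew \<phi> \<psi> = - moment (\<psi> * R)"
proof -
  obtain R where "degree R \<le> degree \<phi> + 1"
    "\<And>\<psi>. jint q I (\<lambda>x. poly \<psi> x * Aq q f g (poly \<phi>) x * \<rho> x) = moment (\<psi> * R)"
    using jint_Aq_eq_moment by blast
  then show ?thesis using that skew_eq_neg_jint_Aq by simp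
qed

sublocale skew_form skew
proof
  fix \<phi> \<psi> \<psi>1 \<psi>2 :: "real poly" and c :: real
  obtain R where R: "\<And>\<psi>. skew \<phi> \<psi> = - moment (\<psi> * R)" using skew_eq_neg_moment by blast
  show "skew \<phi> (\<psi>1 + \<psi>2) = skew \<phi> \<psi>1 + skew \<phi> \<psi>2" unfolding R by (simp add: distrib_right moment_add)
  show "skew \<phi> (smult c \<psi>) = c * skew \<phi> \<psi>" unfolding R by (simp add: moment_smult)
next
  fix \<phi> \<psi> :: "real poly"
  have swap: "(\<lambda>x. (poly \<psi> x * Dq q (poly \<phi>) x - poly \<phi> x * Dq q (poly \<psi>) x) * (poly f (q * x) * \<rho> (q * x)))
      = (\<lambda>x. - 1 * ((poly \<phi> x * Dq q (poly \<psi>) x - poly \<psi> x * Dq q (poly \<phi>) x) * (poly f (q * x) * \<rho> (q * x))))"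
    by (simp add: fun_eq_iff algebra_simps)
  show "skew \<phi> \<psi> = - skew \<psi> \<phi>"
    unfolding skew_def skew_ip_def swap jint_cmult by simp
qed

end

locale jackson_orthogonal = jackson_pearson +
  fixes p :: "nat \<Rightarrow> real poly" and h :: "nat \<Rightarrow> real"
  assumes p_monic: "\<And>n. degree (p n) = n \<and> lead_coeff (p n) = 1"
    and p_orth: "\<And>m n. jint q I (\<lambda>x. poly (p m) x * poly (p n) x * \<rho> x) = (if m = n then h n else 0)"
begin

lemma moment_p_mult_eq_0:
  assumes "degree r < n"
  shows "moment (p n * r) = 0"
proof (rule linear_vanishes_on_degree_le[where \<Lambda> = "\<lambda>r. moment (p n * r)" and K = "n - 1", OF _ _ p_monic])
  show "moment (p n * p k) = 0" if "k \<le> n - 1" for k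
    using p_orth[of n k] that assms unfolding moment_def by simp
qed (use assms in \<open>simp_all add: distrib_left moment_add moment_smult\<close>)

lemma skew_p_p_tridiagonal:
  "skew (p m) (p n) = (if n = Suc m then ccoef q I f g \<rho> p m else if m = Suc n then - ccoef q I f g \<rho> p n else 0)"
proof -
  have c: "ccoef q I f g \<rho> p k = skew (p k) (p (Suc k))" for k
    unfolding ccoef_def skew_eq_neg_jint_Aq ..
  have far: "skew (p k) (p l) = 0" if "Suc k < l" for k l
  proof -
    obtain R where "degree R \<le> degree (p k) + 1" "\<And>\<psi>. skew (p k) \<psi> = - moment (\<psi> * R)"
      using skew_eq_neg_moment by blast
    then show ?thesis using that p_monic[of k] moment_p_mult_eq_0[of R l] by simp
  qed
  consider "n = Suc m" | "m = Suc n" | "m = n" | "Suc m < n" | "Suc n < m" by linarith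
  then show ?thesis by cases (use far[of m n] far[of n m] antisym[of "p m" "p n"] self c in auto)
qed

sublocale tridiagonal_skew_form skew p "ccoef q I f g \<rho> p"
  by unfold_locales (fact p_monic skew_p_p_tridiagonal)+

lemma ccoef_even_neq_0:
  assumes "pfaffian (\<lambda>i j. skew_ip q I (\<lambda>x. poly f (q * x) * \<rho> (q * x)) (\<lambda>x. x ^ i) (\<lambda>x. x ^ j)) (Suc j) \<noteq> 0"
  shows "ccoef q I f g \<rho> p (2*j) \<noteq> 0"
proof -
  have "(\<lambda>x::real. x ^ i) = poly (monom 1 i)" for i by (simp add: fun_eq_iff poly_monom)
  then show ?thesis using assms c_even_neq_0[of j] unfolding skew_def by simp
qed

end

theorem proposition4p6:
  fixes q :: real and I :: qinterval and \<rho> :: "real \<Rightarrow> real"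
    and f g :: "real poly" and p :: "nat \<Rightarrow> real poly" and h :: "nat \<Rightarrow> real"
  assumes q: "0 < q" "q < 1"
    and I: "valid_qinterval I"
    and moments: "\<And>k::nat. jint_integrable q I (\<lambda>x. x ^ k * \<rho> x)"
    and degf: "degree f \<le> 2" and degg: "degree g \<le> 1"
    and pearson: "\<And>x. x \<in> qlattice q I \<Longrightarrow>
        \<rho> (q * x) * poly f (q * x) = \<rho> x * (poly f x - q powr (-1/2) * (1 - q) * x * poly g x)"
    and ends: "vanishes_at_ends q I (\<lambda>x. poly f x * \<rho> x)"
    and p_monic: "\<And>n. degree (p n) = n \<and> lead_coeff (p n) = 1"
    and p_orth: "\<And>m n. jint q I (\<lambda>x. poly (p m) x * poly (p n) x * \<rho> x) = (if m = n then h n else 0)"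
    and h_nz: "\<And>n. h n \<noteq> 0"
    and pf: "\<And>n. n \<ge> 1 \<Longrightarrow>
        pfaffian (\<lambda>i j. skew_ip q I (\<lambda>x. poly f (q * x) * \<rho> (q * x)) (\<lambda>x. x ^ i) (\<lambda>x. x ^ j)) n \<noteq> 0"
  defines "c \<equiv> ccoef q I f g \<rho> p"
    and "\<omega> \<equiv> \<lambda>x. poly f (q * x) * \<rho> (q * x)"
    and "Q \<equiv> Qpoly (ccoef q I f g \<rho> p) p"
  shows "(\<forall>n. degree (Q n) = n \<and> lead_coeff (Q n) = 1)
    \<and> (\<forall>n m. skew_ip q I \<omega> (poly (Q (2*n))) (poly (Q (2*m+1))) = (if n = m then c (2*n) else 0)
           \<and> skew_ip q I \<omega> (poly (Q (2*m+1))) (poly (Q (2*n))) = - (if n = m then c (2*n) else 0))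
    \<and> (\<forall>n m. skew_ip q I \<omega> (poly (Q (2*m))) (poly (Q (2*n))) = 0
           \<and> skew_ip q I \<omega> (poly (Q (2*m+1))) (poly (Q (2*n+1))) = 0)
    \<and> (\<forall>n. p (2*n+1) = Q (2*n+1))
    \<and> (\<forall>n\<ge>1. p (2*n) = Q (2*n) - smult (c (2*n-1) / c (2*n-2)) (Q (2*n-2)))
    \<and> ((\<forall>j. c (2*j+1) \<noteq> 0) \<longrightarrow> (\<forall>n. Q (2*n) =
          smult (\<Prod>j<n. c (2*j+1) / c (2*j))
            (\<Sum>l\<le>n. smult (\<Prod>j<l. c (2*j) / c (2*j+1)) (p (2*l)))))"
proof -
  interpret jackson_orthogonal q I \<rho> f g p h
    by unfold_locales (fact q I moments degf degg pearson ends p_monic p_orth)+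
  \<comment> \<open>only the vanishing of the off-diagonal moments is needed\<close>
  have c_even: "\<And>j. ccoef q I f g \<rho> p (2*j) \<noteq> 0" using pf ccoef_even_neq_0 by simp
  have skew_ip_Q: "skew_ip q I \<omega> (poly (Q a)) (poly (Q b)) = skew (Q a) (Q b)" for a b
    unfolding \<omega>_def skew_def ..
  have Q_degree: "degree (Q n) = n" and Q_lead_coeff: "coeff (Q n) n = 1" for n
    using Qpoly_monic[OF p_monic, of "ccoef q I f g \<rho> p" n] unfolding Q_def by metis+
  have Q_even_odd: "skew (Q (2*n)) (Q (2*m+1)) = (if n = m then c (2*n) else 0)" for n m
    unfolding Q_def c_def by (rule Qpoly_even_odd[OF c_even])
  have Q_odd_even: "skew (Q (2*m+1)) (Q (2*n)) = - (if n = m then c (2*n) else 0)" for n m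
    using Q_even_odd[of n m] antisym[of "Q (2*m+1)" "Q (2*n)"] by simp
  have Q_even_even: "skew (Q (2*m)) (Q (2*n)) = 0" and Q_odd_odd: "skew (Q (2*m+1)) (Q (2*n+1)) = 0"
    for m n unfolding Q_def by (rule Qpoly_even_even Qpoly_odd_odd)+
  have p_odd: "p (2*n+1) = Q (2*n+1)" for n
    unfolding Q_def Qpoly_odd ..
  have p_even: "p (2*n) = Q (2*n) - smult (c (2*n-1) / c (2*n-2)) (Q (2*n-2))" if "n \<ge> 1" for n
    using that Qpoly_even_Suc[of "ccoef q I f g \<rho> p" p "n - 1"] unfolding Q_def c_def
    by (cases n) simp_all
  have Q_even_normalized: "Q (2*n) = smult (\<Prod>j<n. c (2*j+1) / c (2*j))
      (\<Sum>l\<le>n. smult (\<Prod>j<l. c (2*j) / c (2*j+1)) (p (2*l)))" if "\<forall>j. c (2*j+1) \<noteq> 0" for n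
    using that Qpoly_even_normalized[where c = "ccoef q I f g \<rho> p", OF c_even] unfolding Q_def c_def by blast
  show ?thesis
    unfolding skew_ip_Q Q_even_odd Q_odd_even Q_even_even Q_odd_odd
    using p_odd p_even Q_even_normalized by (simp add: Q_degree Q_lead_coeff)
qed

end
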